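(* Let $G$ be a group and $(\rho,V)$ a linear representation of $G$ on a finite-dimensional vector space $V$ over a field $k$. Let $A$ be a nonempty finite subset of $G$ and $Y$ a $k$-subspace of $V$ with $\dim\langle A\cdot Y\rangle\leq\alpha|A|$ for some $\alpha\in\mathbb{R}_{\geq0}$. Then there exists a nonempty subset $B\subset A$ such that $\dim\langle CB\cdot Y\rangle\leq\alpha|CB|$ for every finite subset $C$ of $G$.
   Context: $g\cdot v=\rho(g)v$; for $S\subset G$, $\langle S\cdot Y\rangle$ is the $k$-span of $\{s\cdot v\mid s\in S,v\in Y\}$; $CB=\{cb\mid c\in C,b\in B\}$. *)

theory Defs
  imports "HOL-Algebra.Algebra"
begin

definition representation ::
  "('g, 'm) monoid_scheme \<Rightarrow> ('k::field \<Rightarrow> 'v::ab_group_add \<Rightarrow> 'v) \<Rightarrow> ('g \<Rightarrow> 'v \<Rightarrow> 'v) \<Rightarrow> bool"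
where
  "representation G scale \<rho> \<longleftrightarrow>
     vector_space scale \<and>
     (\<forall>g \<in> carrier G. Vector_Spaces.linear scale scale (\<rho> g)) \<and>
     (\<forall>g \<in> carrier G. \<forall>h \<in> carrier G. \<rho> (g \<otimes>\<^bsub>G\<^esub> h) = \<rho> g \<circ> \<rho> h) \<and>
     \<rho> \<one>\<^bsub>G\<^esub> = id"

definition orbit_span ::
  "('k::field \<Rightarrow> 'v::ab_group_add \<Rightarrow> 'v) \<Rightarrow> ('g \<Rightarrow> 'v \<Rightarrow> 'v) \<Rightarrow> 'g set \<Rightarrow> 'v set \<Rightarrow> 'v set"
where
  "orbit_span scale \<rho> S Y = module.span scale {\<rho> s v | s v. s \<in> S \<and> v \<in> Y}"

end

theory Submission
  imports Defs
begin

text \<open>The function \<open>h S = dim \<langle>S\<cdot>Y\<rangle> - \<alpha>|S|\<close> is submodular, by the dimension formula for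
  sums of subspaces, and invariant under left translation, since each \<open>\<rho> c\<close> is a linear
  bijection. Let \<open>B\<close> minimise \<open>h\<close> among the nonempty subsets of \<open>A\<close>; then
  \<open>h B \<le> h A \<le> 0 = h {}\<close>, so \<open>B\<close> minimises \<open>h\<close> among all its subsets. Grow \<open>CB\<close> one
  translate \<open>cB\<close> at a time: \<open>CB \<inter> cB = cD\<close> for some \<open>D \<subseteq> B\<close>, so \<open>h (CB \<inter> cB) = h D \<ge> h B = h (cB)\<close>,
  and submodularity gives \<open>h (CB \<union> cB) \<le> h (CB)\<close>. Hence \<open>h (CB) \<le> h B \<le> 0\<close>.\<close>

lemma ex_min_nonempty_subset:
  fixes f :: "'a set \<Rightarrow> 'b::linorder"
  assumes "finite A" and "A \<noteq> {}"
  obtains B where "B \<subseteq> A" and "B \<noteq> {}" and "\<And>D. D \<subseteq> A \<Longrightarrow> D \<noteq> {} \<Longrightarrow> f B \<le> f D"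
proof -
  have "finite {B. B \<subseteq> A \<and> B \<noteq> {}}" and "A \<in> {B. B \<subseteq> A \<and> B \<noteq> {}}"
    using assms by auto
  then obtain B where "is_arg_min f (\<lambda>B. B \<in> {B. B \<subseteq> A \<and> B \<noteq> {}}) B"
    using ex_is_arg_min_if_finite by blast
  then show ?thesis
    using that unfolding is_arg_min_linorder by auto
qed

lemma (in finite_dimensional_vector_space) dim_Un_plus_dim_span_Int:
  "dim (S \<union> T) + dim (span S \<inter> span T) = dim S + dim T"
  using dim_sums_Int[of "span S" "span T"] by (simp flip: span_Un)

lemma (in group) card_singleton_set_mult:
  assumes "c \<in> carrier G" and "S \<subseteq> carrier G"
  shows "card ({c} <#> S) = card S"
proof -
  have "{c} <#> S = (\<otimes>) c ` S"
    unfolding set_mult_def by auto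
  moreover have "inj_on ((\<otimes>) c) S"
    using inj_on_cmult[OF assms(1)] assms(2) by (rule inj_on_subset)
  ultimately show ?thesis
    by (simp add: card_image)
qed

lemma (in group) submodular_minimiser_set_mult_le:
  fixes h :: "'a set \<Rightarrow> 'c::ordered_ab_group_add"
  assumes submodular: "\<And>S T. finite S \<Longrightarrow> finite T \<Longrightarrow> h (S \<union> T) + h (S \<inter> T) \<le> h S + h T"
    and translation_invariant: "\<And>c S. c \<in> carrier G \<Longrightarrow> S \<subseteq> carrier G \<Longrightarrow> h ({c} <#> S) = h S"
    and "finite B" and B_carrier: "B \<subseteq> carrier G"
    and minimal: "\<And>D. D \<subseteq> B \<Longrightarrow> h B \<le> h D"
    and "finite C" and "C \<noteq> {}" and "C \<subseteq> carrier G"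
  shows "h (C <#> B) \<le> h B"
  using \<open>finite C\<close> \<open>C \<noteq> {}\<close> \<open>C \<subseteq> carrier G\<close>
proof (induction C rule: finite_ne_induct)
  case (singleton c)
  then show ?case
    using translation_invariant B_carrier by simp
next
  case (insert c C)
  define CB where "CB = C <#> B"
  define cB where "cB = {c} <#> B"
  define D where "D = {b \<in> B. c \<otimes> b \<in> CB}"
  have c: "c \<in> carrier G"
    using insert.prems by simp
  have "D \<subseteq> B"
    unfolding D_def by auto
  have "CB \<inter> cB = {c} <#> D"
    unfolding CB_def cB_def D_def set_mult_def by auto
  then have "h B \<le> h (CB \<inter> cB)"
    using minimal[OF \<open>D \<subseteq> B\<close>] translation_invariant[OF c] \<open>D \<subseteq> B\<close> B_carrier by auto
  then have "h (CB \<union> cB) + h B \<le> h (CB \<union> cB) + h (CB \<inter> cB)"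
    by (rule add_left_mono)
  also have "\<dots> \<le> h CB + h cB"
    by (rule submodular) (auto simp: CB_def cB_def set_mult_def \<open>finite B\<close> \<open>finite C\<close>)
  also have "\<dots> = h CB + h B"
    unfolding cB_def using translation_invariant[OF c B_carrier] by simp
  finally have "h (CB \<union> cB) \<le> h CB"
    by simp
  moreover have "insert c C <#> B = CB \<union> cB"
    unfolding CB_def cB_def set_mult_def by auto
  moreover have "h CB \<le> h B"
    unfolding CB_def using insert.IH insert.prems by simp
  ultimately show ?case
    by (metis order_trans)
qed

lemma representation_inj:
  assumes "group G" and "representation G scale \<rho>" and "c \<in> carrier G"
  shows "inj (\<rho> c)"
proof (rule inj_on_inverseI)
  interpret group G by fact
  fix x
  have "\<rho> (inv\<^bsub>G\<^esub> c) (\<rho> c x) = \<rho> (inv\<^bsub>G\<^esub> c \<otimes>\<^bsub>G\<^esub> c) x"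
    using assms(2,3) unfolding representation_def by (metis inv_closed comp_apply)
  also have "\<dots> = x"
    using assms(2,3) unfolding representation_def by simp
  finally show "\<rho> (inv\<^bsub>G\<^esub> c) (\<rho> c x) = x" .
qed

definition orbit_excess ::
  "('k::field \<Rightarrow> 'v::ab_group_add \<Rightarrow> 'v) \<Rightarrow> ('g \<Rightarrow> 'v \<Rightarrow> 'v) \<Rightarrow> 'v set \<Rightarrow> real \<Rightarrow> 'g set \<Rightarrow> real"
where
  "orbit_excess scale \<rho> Y \<alpha> S =
     real (vector_space.dim scale (orbit_span scale \<rho> S Y)) - \<alpha> * real (card S)"

lemma orbit_excess_submodular:
  assumes "finite_dimensional_vector_space scale Basis" and "finite S" and "finite T"
  shows "orbit_excess scale \<rho> Y \<alpha> (S \<union> T) + orbit_excess scale \<rho> Y \<alpha> (S \<inter> T)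
           \<le> orbit_excess scale \<rho> Y \<alpha> S + orbit_excess scale \<rho> Y \<alpha> T"
proof -
  interpret finite_dimensional_vector_space scale Basis by fact
  define W where "W S = {\<rho> s v | s v. s \<in> S \<and> v \<in> Y}" for S
  have dim_orbit_span: "dim (orbit_span scale \<rho> S Y) = dim (W S)" for S
    unfolding orbit_span_def W_def by simp
  have W_Un: "W (S \<union> T) = W S \<union> W T"
    unfolding W_def by auto
  have "dim (W (S \<inter> T)) \<le> dim (span (W S) \<inter> span (W T))"
    by (rule dim_subset) (auto simp: W_def intro: span_base)
  then have "real (dim (W (S \<union> T))) + real (dim (W (S \<inter> T))) \<le> real (dim (W S)) + real (dim (W T))"
    using dim_Un_plus_dim_span_Int[of "W S" "W T"] unfolding W_Un by linarith
  moreover have "\<alpha> * card (S \<union> T) + \<alpha> * card (S \<inter> T) = \<alpha> * card S + \<alpha> * card T"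
    using card_Un_Int[OF assms(2,3)] by (simp flip: distrib_left of_nat_add)
  ultimately show ?thesis
    unfolding orbit_excess_def dim_orbit_span by linarith
qed

lemma orbit_excess_translate:
  assumes "group G" and "representation G scale \<rho>"
    and "finite_dimensional_vector_space scale Basis"
    and "c \<in> carrier G" and "S \<subseteq> carrier G"
  shows "orbit_excess scale \<rho> Y \<alpha> ({c} <#>\<^bsub>G\<^esub> S) = orbit_excess scale \<rho> Y \<alpha> S"
proof -
  interpret finite_dimensional_vector_space scale Basis by fact
  interpret finite_dimensional_vector_space_pair_1 scale Basis scale ..
  define W where "W S = {\<rho> s v | s v. s \<in> S \<and> v \<in> Y}" for S
  have "\<rho> (c \<otimes>\<^bsub>G\<^esub> s) v = \<rho> c (\<rho> s v)" if "s \<in> S" for s v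
    using assms(2,4,5) that unfolding Defs.representation_def by (metis comp_apply subsetD)
  then have "W ({c} <#>\<^bsub>G\<^esub> S) = \<rho> c ` W S"
    unfolding W_def set_mult_def by (auto simp: image_iff) metis+
  moreover have "dim (\<rho> c ` W S) = dim (W S)"
    using assms(2,4) representation_inj[OF assms(1,2,4)]
    by (intro dim_image_eq) (auto simp: Defs.representation_def intro: inj_on_subset)
  moreover have "card ({c} <#>\<^bsub>G\<^esub> S) = card S"
    using assms(1,4,5) by (rule group.card_singleton_set_mult)
  ultimately show ?thesis
    unfolding orbit_excess_def orbit_span_def W_def by simp
qed

theorem mainTheorem13:
  fixes G :: "('g, 'm) monoid_scheme"
    and scale :: "'k::field \<Rightarrow> 'v::ab_group_add \<Rightarrow> 'v"
    and \<rho> :: "'g \<Rightarrow> 'v \<Rightarrow> 'v"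
    and Basis :: "'v set"
    and A :: "'g set" and Y :: "'v set" and \<alpha> :: real
  assumes "group G"
    and "representation G scale \<rho>"
    and "finite_dimensional_vector_space scale Basis"
    and "finite A" and "A \<noteq> {}" and "A \<subseteq> carrier G"
    and "module.subspace scale Y"
    and "\<alpha> \<ge> 0"
    and "real (vector_space.dim scale (orbit_span scale \<rho> A Y)) \<le> \<alpha> * real (card A)"
  shows "\<exists>B. B \<noteq> {} \<and> B \<subseteq> A \<and>
           (\<forall>C. finite C \<and> C \<subseteq> carrier G \<longrightarrow>
              real (vector_space.dim scale (orbit_span scale \<rho> (C <#>\<^bsub>G\<^esub> B) Y))
                \<le> \<alpha> * real (card (C <#>\<^bsub>G\<^esub> B)))"
proof -
  interpret finite_dimensional_vector_space scale Basis by fact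
  let ?h = "orbit_excess scale \<rho> Y \<alpha>"
  obtain B where B: "B \<subseteq> A" "B \<noteq> {}" and B_min: "\<And>D. D \<subseteq> A \<Longrightarrow> D \<noteq> {} \<Longrightarrow> ?h B \<le> ?h D"
    using ex_min_nonempty_subset[OF assms(4,5)] by blast
  have h_empty: "?h {} = 0"
    unfolding orbit_excess_def orbit_span_def by simp
  have "?h B \<le> 0"
    using B_min[of A] assms(5,9) unfolding orbit_excess_def by simp
  then have minimal: "?h B \<le> ?h D" if "D \<subseteq> B" for D
    using B_min[of D] B that h_empty by (cases "D = {}") auto
  have "?h (C <#>\<^bsub>G\<^esub> B) \<le> 0" if "finite C" "C \<subseteq> carrier G" for C
  proof (cases "C = {}")
    case True
    then show ?thesis
      using h_empty by (simp add: set_mult_def)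
  next
    case False
    have "finite B" and "B \<subseteq> carrier G"
      using B assms(4,6) finite_subset by auto
    then have "?h (C <#>\<^bsub>G\<^esub> B) \<le> ?h B"
      using group.submodular_minimiser_set_mult_le[of G ?h, OF assms(1)
          orbit_excess_submodular[OF assms(3)] orbit_excess_translate[OF assms(1-3)]]
        minimal False that by blast
    with \<open>?h B \<le> 0\<close> show ?thesis
      by simp
  qed
  then show ?thesis
    using B unfolding orbit_excess_def by auto
qed

end
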